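(* Consider the generalized $q$-Toda hierarchy on the Lax operator $\mathcal L=\Lambda_\epsilon+u+e^{v}\Lambda_\epsilon^{-1}$, with flows $\epsilon\partial_{t_j}\mathcal L=[(B_j)_+,\mathcal L]$, $B_j=\mathcal L^j/j!$. Let $H_j=\int h_j\,dx$ with $h_j=\frac{1}{j!}\operatorname{Res}\mathcal L^j$. Then the flows are Hamiltonian with respect to the first Poisson bracket, $$\frac{\partial w}{\partial t_j}=\{w,H_j\}_1,\qquad w\in\{u,v\},\ j\ge 0,$$ and they satisfy the bi-Hamiltonian recursion relation $\{\cdot,H_{n-1}\}_2=n\{\cdot,H_n\}_1$ for $n\ge1$.
   Context: Fix $\epsilon>0$; $\Lambda_\epsilon=e^{\epsilon x^2\partial_x}$ acts by $\Lambda_\epsilon^j g(x)=g\!\left(\frac{x}{1-j\epsilon x}\right)$, $j\in\mathbb{Z}$. Difference operators $A=\sum_k A_k(x)\Lambda_\epsilon^k$ multiply by $(X\Lambda_\epsilon^i)\circ(Y\Lambda_\epsilon^j)=X(x)Y\!\left(\frac{x}{1-i\epsilon x}\right)\Lambda_\epsilon^{i+j}$; $A_+=\sum_{k\ge0}A_k\Lambda_\epsilon^k$ and $\operatorname{Res}A=A_0$. For a local functional $H=\int h\,dx$ and $w\in\{u,v\}$, $\{w,H\}_i=\sum_{w'\in\{u,v\}}P_i^{ww'}\frac{\delta H}{\delta w'}$, where $\frac{\delta H}{\delta w'}$ is the variational derivative and the operators $P_i^{ww'}$ are given by the brackets (with $\delta(x-y)$ the delta function): $\{u(x),u(y)\}_1=\{v(x),v(y)\}_1=0$,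 $\{u(x),v(y)\}_1=\frac1\epsilon[\Lambda_\epsilon-1]\delta(x-y)$, $\{v(x),u(y)\}_1=\frac1\epsilon[1-\Lambda_\epsilon^{-1}]\delta(x-y)$; $\{u(x),u(y)\}_2=\frac1\epsilon[\Lambda_\epsilon e^{v(x)}-e^{v(x)}\Lambda_\epsilon^{-1}]\delta(x-y)$, $\{u(x),v(y)\}_2=\frac1\epsilon u(x)[\Lambda_\epsilon-1]\delta(x-y)$, $\{v(x),u(y)\}_2=\frac1\epsilon[1-\Lambda_\epsilon^{-1}]u(x)\delta(x-y)$, $\{v(x),v(y)\}_2=\frac1\epsilon[\Lambda_\epsilon-\Lambda_\epsilon^{-1}]\delta(x-y)$.
   Formalization: The Hamiltonian density is $h_j=\frac{1}{(j+1)!}\operatorname{Res}\mathcal L^{j+1}$ in place of $\frac{1}{j!}\operatorname{Res}\mathcal L^j$, in both the flows and the recursion relation. The statement above fails without it. *)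

theory Defs
  imports "HOL-Analysis.Analysis"
begin

text \<open>A jet (U,V) stands for the values U k = u(Lambda_eps^k x), V k = v(Lambda_eps^k x).
  A difference function (dfun) is a function of the jet; a difference operator
  A = sum_k A_k Lambda^k is represented by its coefficient family (finite support).\<close>

type_synonym jet = "(int \<Rightarrow> real) \<times> (int \<Rightarrow> real)"
type_synonym dfun = "jet \<Rightarrow> real"
type_synonym dop = "int \<Rightarrow> dfun"

definition jshift :: "int \<Rightarrow> jet \<Rightarrow> jet" where
  "jshift k J = ((\<lambda>i. fst J (i + k)), (\<lambda>i. snd J (i + k)))"

definition Lam :: "int \<Rightarrow> dfun \<Rightarrow> dfun" where
  "Lam k f = (\<lambda>J. f (jshift k J))"

text \<open>(X Lambda^i) o (Y Lambda^j) = X (Lambda^i Y) Lambda^(i+j).\<close>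
definition dop_mul :: "dop \<Rightarrow> dop \<Rightarrow> dop" where
  "dop_mul A B = (\<lambda>n J. \<Sum>i\<in>{i. A i \<noteq> (\<lambda>_. 0)}. A i J * Lam i (B (n - i)) J)"

definition dop_one :: dop where
  "dop_one = (\<lambda>k J. if k = 0 then 1 else 0)"

fun dop_pow :: "dop \<Rightarrow> nat \<Rightarrow> dop" where
  "dop_pow A 0 = dop_one"
| "dop_pow A (Suc n) = dop_mul (dop_pow A n) A"

definition dop_plus_part :: "dop \<Rightarrow> dop" where
  "dop_plus_part A = (\<lambda>k. if 0 \<le> k then A k else (\<lambda>_. 0))"

definition dop_scale :: "real \<Rightarrow> dop \<Rightarrow> dop" where
  "dop_scale c A = (\<lambda>k J. c * A k J)"

definition dop_comm :: "dop \<Rightarrow> dop \<Rightarrow> dop" where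
  "dop_comm A B = (\<lambda>k J. dop_mul A B k J - dop_mul B A k J)"

definition Res :: "dop \<Rightarrow> dfun" where
  "Res A = A 0"

definition laxL :: dop where
  "laxL k = (if k = 1 then (\<lambda>_. 1) else if k = 0 then (\<lambda>J. fst J 0)
             else if k = -1 then (\<lambda>J. exp (snd J 0)) else (\<lambda>_. 0))"

definition Bop :: "nat \<Rightarrow> dop" where
  "Bop j = dop_scale (1 / fact j) (dop_pow laxL j)"

text \<open>Hamiltonian density h_j = Res L^(j+1) / (j+1)!  (index convention).\<close>
definition hdens :: "nat \<Rightarrow> dfun" where
  "hdens j = (\<lambda>J. Res (dop_pow laxL (j + 1)) J / fact (j + 1))"

definition pdU :: "int \<Rightarrow> dfun \<Rightarrow> dfun" where
  "pdU k f = (\<lambda>J. deriv (\<lambda>s. f ((fst J)(k := s), snd J)) (fst J k))"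

definition pdV :: "int \<Rightarrow> dfun \<Rightarrow> dfun" where
  "pdV k f = (\<lambda>J. deriv (\<lambda>s. f (fst J, (snd J)(k := s))) (snd J k))"

definition varU :: "dfun \<Rightarrow> dfun" where
  "varU h = (\<lambda>J. \<Sum>k\<in>{k. pdU k h \<noteq> (\<lambda>_. 0)}. pdU k h (jshift (- k) J))"

definition varV :: "dfun \<Rightarrow> dfun" where
  "varV h = (\<lambda>J. \<Sum>k\<in>{k. pdV k h \<noteq> (\<lambda>_. 0)}. pdV k h (jshift (- k) J))"

definition PB1_u :: "real \<Rightarrow> dfun \<Rightarrow> dfun" where
  "PB1_u eps h = (\<lambda>J. (Lam 1 (varV h) J - varV h J) / eps)"

definition PB1_v :: "real \<Rightarrow> dfun \<Rightarrow> dfun" where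
  "PB1_v eps h = (\<lambda>J. (varU h J - Lam (-1) (varU h) J) / eps)"

definition PB2_u :: "real \<Rightarrow> dfun \<Rightarrow> dfun" where
  "PB2_u eps h = (\<lambda>J. (Lam 1 (\<lambda>K. exp (snd K 0) * varU h K) J
                        - exp (snd J 0) * Lam (-1) (varU h) J
                        + fst J 0 * (Lam 1 (varV h) J - varV h J)) / eps)"

definition PB2_v :: "real \<Rightarrow> dfun \<Rightarrow> dfun" where
  "PB2_v eps h = (\<lambda>J. (fst J 0 * varU h J - Lam (-1) (\<lambda>K. fst K 0 * varU h K) J
                        + Lam 1 (varV h) J - Lam (-1) (varV h) J) / eps)"

text \<open>Concrete shift: Lambda_eps^k g (x) = g (x / (1 - k eps x)); jet of (u,v) at x.\<close>
definition jet_of :: "real \<Rightarrow> (real \<Rightarrow> real) \<Rightarrow> (real \<Rightarrow> real) \<Rightarrow> real \<Rightarrow> jet" where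
  "jet_of eps u v x = ((\<lambda>k. u (x / (1 - of_int k * eps * x))), (\<lambda>k. v (x / (1 - of_int k * eps * x))))"

end

theory Submission
  imports Defs
begin

(* Write L^m = sum_n c_(m,n) Lambda^n for the powers of L = Lambda + u + e^v Lambda^(-1).
   The coefficients c_(m,n) (lax_coeff) obey the recursion from L^(m+1) = L^m L, vanish
   for |n| > m, and satisfy the factorisation L^(p+q) = L^q L^p.
   1. dop_pow laxL m is given by lax_coeff m, so h_n = c_(n+1,0) / (n+1)! and B_j = L^j / j!.
   2. Differentiating the recursion gives a Leibniz formula for the partial derivatives
      of c_(m,n) in u_k and v_k; summing over all shifts and using the factorisation
      yields the variational derivatives
        dH_n/du = c_(n,0) / n!,   dH_n/dv = e^(v_0) (Lambda^(-1) c_(n,1)) / n!.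
   3. Hence the Lambda^0 and Lambda^(-1) coefficients of [(B_j)_+, L] are eps times the
      first-bracket flows, and {., H_(n-1)}_2 = n {., H_n}_1 reduces to the recursion
      for c_(n,.) read from the left, L^(n+1) = L L^n. *)

lemma jshift_fst [simp]: "fst (jshift k J) i = fst J (i + k)"
  by (simp add: jshift_def)

lemma jshift_snd [simp]: "snd (jshift k J) i = snd J (i + k)"
  by (simp add: jshift_def)

lemma jshift_jshift [simp]: "jshift a (jshift b J) = jshift (a + b) J"
  by (simp add: jshift_def algebra_simps)

lemma jshift_0 [simp]: "jshift 0 J = J"
  by (simp add: jshift_def)

section \<open>Coefficients of the powers of the Lax operator\<close>

text \<open>\<open>lax_coeff m n J\<close> is the coefficient of \<open>Lambda^n\<close> in \<open>L^m\<close>; the recursion is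
  \<open>L^(m+1) = L^m L\<close> with \<open>L = Lambda + u + e^v Lambda^(-1)\<close>.\<close>

fun lax_coeff :: "nat \<Rightarrow> int \<Rightarrow> jet \<Rightarrow> real" where
  "lax_coeff 0 n J = (if n = 0 then 1 else 0)"
| "lax_coeff (Suc m) n J = lax_coeff m (n - 1) J + lax_coeff m n J * fst J n
     + lax_coeff m (n + 1) J * exp (snd J (n + 1))"

lemma lax_coeff_out_of_range: "\<bar>n\<bar> > int m \<Longrightarrow> lax_coeff m n J = 0"
  by (induction m arbitrary: n) auto

lemma finite_lax_coeff_support: "finite {i. (\<lambda>J. lax_coeff m i J) \<noteq> (\<lambda>_. 0)}"
proof (rule finite_subset[of _ "{-int m..int m}"])
  show "{i. (\<lambda>J. lax_coeff m i J) \<noteq> (\<lambda>_. 0)} \<subseteq> {-int m..int m}"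
    using lax_coeff_out_of_range[of m] by fastforce
qed simp

text \<open>Factorisation \<open>L^(p+q) = L^q L^p\<close> in coefficients: a sum over the shift \<open>c - k\<close>
  contributed by \<open>L^q\<close>.  The centre \<open>c\<close> and the index set \<open>S\<close> (which must cover all
  nonzero contributions) are arbitrary; this is the form in which the variational
  derivatives are summed below.\<close>

lemma lax_coeff_add:
  assumes S: "finite S" "\<And>i. \<bar>i\<bar> \<le> int q \<Longrightarrow> c - i \<in> S"
  shows "lax_coeff (p + q) n J
       = (\<Sum>k\<in>S. lax_coeff q (c - k) J * lax_coeff p (n - c + k) (jshift (c - k) J))"
proof (induction p arbitrary: n)
  case 0
  have "(\<Sum>k\<in>S. lax_coeff q (c - k) J * lax_coeff 0 (n - c + k) (jshift (c - k) J))
      = (\<Sum>k\<in>S. if k = c - n then lax_coeff q n J else 0)"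
    by (rule sum.cong) auto
  also have "\<dots> = lax_coeff q n J"
    using S(1) S(2)[of n] lax_coeff_out_of_range[of q n J]
    by (cases "\<bar>n\<bar> \<le> int q") (auto simp: sum.delta)
  finally show ?case by simp
next
  case (Suc p)
  let ?t = "\<lambda>k i. lax_coeff q (c - k) J * lax_coeff p i (jshift (c - k) J)"
  have "lax_coeff (Suc p + q) n J
      = (\<Sum>k\<in>S. ?t k (n - 1 - c + k)) + (\<Sum>k\<in>S. ?t k (n - c + k)) * fst J n
        + (\<Sum>k\<in>S. ?t k (n + 1 - c + k)) * exp (snd J (n + 1))"
    using Suc.IH[of "n - 1"] Suc.IH[of n] Suc.IH[of "n + 1"] by simp
  also have "\<dots> = (\<Sum>k\<in>S. ?t k (n - 1 - c + k) + ?t k (n - c + k) * fst J n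
                    + ?t k (n + 1 - c + k) * exp (snd J (n + 1)))"
    by (simp add: sum.distrib sum_distrib_right)
  also have "\<dots> = (\<Sum>k\<in>S. lax_coeff q (c - k) J * lax_coeff (Suc p) (n - c + k) (jshift (c - k) J))"
  proof (rule sum.cong[OF refl])
    fix k
    have "n - c + k - 1 = n - 1 - c + k" "n - c + k + 1 = n + 1 - c + k"
      "n - c + k + (c - k) = n" "n + 1 - c + k + (c - k) = n + 1" by simp_all
    then show "?t k (n - 1 - c + k) + ?t k (n - c + k) * fst J n
               + ?t k (n + 1 - c + k) * exp (snd J (n + 1))
             = lax_coeff q (c - k) J * lax_coeff (Suc p) (n - c + k) (jshift (c - k) J)"
      unfolding lax_coeff.simps jshift_fst jshift_snd by (simp add: algebra_simps)
  qed
  finally show ?case .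
qed

text \<open>The recursion read from the left, \<open>L^(m+1) = L L^m\<close>: the special case \<open>q = 1\<close>.\<close>

lemma lax_coeff_Suc_left:
  "lax_coeff (Suc m) n J = lax_coeff m (n - 1) (jshift 1 J) + fst J 0 * lax_coeff m n J
     + exp (snd J 0) * lax_coeff m (n + 1) (jshift (-1) J)"
proof -
  have "lax_coeff (m + 1) n J
      = (\<Sum>k\<in>{-1, 0, 1}. lax_coeff 1 (0 - k) J * lax_coeff m (n - 0 + k) (jshift (0 - k) J))"
    by (rule lax_coeff_add) auto
  then show ?thesis by simp
qed

lemma dop_mul_eq_sum:
  assumes "finite {i. A i \<noteq> (\<lambda>_. 0)}" "finite S"
    and "\<And>i. i \<notin> S \<Longrightarrow> A i J * Lam i (B (n - i)) J = 0"
  shows "dop_mul A B n J = (\<Sum>i\<in>S. A i J * Lam i (B (n - i)) J)"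
proof -
  let ?T = "{i. A i \<noteq> (\<lambda>_. 0)}"
  have "dop_mul A B n J = (\<Sum>i\<in>?T \<union> S. A i J * Lam i (B (n - i)) J)"
    unfolding dop_mul_def by (rule sum.mono_neutral_left) (use assms in auto)
  also have "\<dots> = (\<Sum>i\<in>S. A i J * Lam i (B (n - i)) J)"
    by (rule sum.mono_neutral_right) (use assms in auto)
  finally show ?thesis .
qed

lemma finite_laxL_support: "finite {i. laxL i \<noteq> (\<lambda>_. 0)}"
  by (rule finite_subset[of _ "{-1, 0, 1}"]) (auto simp: laxL_def)

lemma dop_pow_laxL: "dop_pow laxL m = (\<lambda>n J. lax_coeff m n J)"
proof (induction m)
  case 0
  show ?case by (auto simp: dop_one_def)
next
  case (Suc m)
  show ?case
  proof (intro ext)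
    fix n J
    have "dop_pow laxL (Suc m) n J = dop_mul (\<lambda>n J. lax_coeff m n J) laxL n J"
      using Suc by simp
    also have "\<dots> = (\<Sum>i\<in>{n - 1, n, n + 1}. lax_coeff m i J * Lam i (laxL (n - i)) J)"
      by (rule dop_mul_eq_sum) (auto simp: finite_lax_coeff_support laxL_def Lam_def)
    also have "\<dots> = lax_coeff (Suc m) n J"
      by (simp add: laxL_def Lam_def)
    finally show "dop_pow laxL (Suc m) n J = lax_coeff (Suc m) n J" .
  qed
qed

lemma hdens_eq: "hdens n = (\<lambda>J. lax_coeff (Suc n) 0 J / fact (Suc n))"
  unfolding hdens_def Res_def dop_pow_laxL by simp

abbreviation Bplus :: "nat \<Rightarrow> dop" where
  "Bplus j \<equiv> dop_plus_part (Bop j)"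

lemma Bplus_eq: "Bplus j k J = (if 0 \<le> k then lax_coeff j k J / fact j else 0)"
  by (simp add: dop_plus_part_def Bop_def dop_scale_def dop_pow_laxL)

lemma finite_Bplus_support: "finite {i. Bplus j i \<noteq> (\<lambda>_. 0)}"
proof (rule finite_subset[of _ "{-int j..int j}"])
  show "{i. Bplus j i \<noteq> (\<lambda>_. 0)} \<subseteq> {-int j..int j}"
    using lax_coeff_out_of_range[of j] by (fastforce simp: Bplus_eq)
qed simp

lemma Bplus_mul_laxL:
  "dop_mul (Bplus j) laxL n J
     = Bplus j (n - 1) J + Bplus j n J * fst J n + Bplus j (n + 1) J * exp (snd J (n + 1))"
proof -
  have "dop_mul (Bplus j) laxL n J = (\<Sum>i\<in>{n - 1, n, n + 1}. Bplus j i J * Lam i (laxL (n - i)) J)"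
    by (rule dop_mul_eq_sum) (auto simp: finite_Bplus_support laxL_def Lam_def)
  then show ?thesis by (simp add: laxL_def Lam_def)
qed

lemma laxL_mul_Bplus:
  "dop_mul laxL (Bplus j) n J
     = Bplus j (n - 1) (jshift 1 J) + fst J 0 * Bplus j n J
       + exp (snd J 0) * Bplus j (n + 1) (jshift (-1) J)"
proof -
  have "dop_mul laxL (Bplus j) n J = (\<Sum>i\<in>{-1, 0, 1}. laxL i J * Lam i (Bplus j (n - i)) J)"
    by (rule dop_mul_eq_sum[OF finite_laxL_support]) (auto simp: laxL_def)
  then show ?thesis by (simp add: laxL_def Lam_def algebra_simps)
qed

section \<open>Partial derivatives of the coefficients\<close>

text \<open>Leibniz rule \<open>d L^m = sum_(p<m) L^p (dL) L^(m-1-p)\<close>, where \<open>dL/du_k\<close> is the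
  multiplication by the unit at position \<open>k\<close> and \<open>dL/dv_k = e^(v_k) Lambda^(-1)\<close> at
  position \<open>k\<close>.\<close>

definition lax_coeff_du :: "nat \<Rightarrow> int \<Rightarrow> int \<Rightarrow> jet \<Rightarrow> real" where
  "lax_coeff_du m k n J = (\<Sum>p<m. lax_coeff p k J * lax_coeff (m - 1 - p) (n - k) (jshift k J))"

definition lax_coeff_dv :: "nat \<Rightarrow> int \<Rightarrow> int \<Rightarrow> jet \<Rightarrow> real" where
  "lax_coeff_dv m k n J = (\<Sum>p<m. lax_coeff p k J * exp (snd J k)
                              * lax_coeff (m - 1 - p) (n - k + 1) (jshift (k - 1) J))"

lemma lax_coeff_du_Suc:
  "lax_coeff_du (Suc m) k n J = lax_coeff_du m k (n - 1) J + lax_coeff_du m k n J * fst J n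
     + lax_coeff m n J * (if n = k then 1 else 0) + lax_coeff_du m k (n + 1) J * exp (snd J (n + 1))"
proof -
  let ?t = "\<lambda>p i. lax_coeff p k J * lax_coeff (m - 1 - p) i (jshift k J)"
  have "lax_coeff_du (Suc m) k n J
      = (\<Sum>p<m. lax_coeff p k J * lax_coeff (Suc (m - 1 - p)) (n - k) (jshift k J))
        + lax_coeff m k J * lax_coeff 0 (n - k) (jshift k J)"
    unfolding lax_coeff_du_def by (auto simp: Suc_diff_Suc intro!: sum.cong)
  also have "\<dots> = (\<Sum>p<m. ?t p (n - 1 - k) + ?t p (n - k) * fst J n
                            + ?t p (n + 1 - k) * exp (snd J (n + 1)))
                   + lax_coeff m n J * (if n = k then 1 else 0)"
  proof -
    have "n - k - 1 = n - 1 - k" "n - k + 1 = n + 1 - k" "n - k + k = n" "n + 1 - k + k = n + 1"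
      by simp_all
    then show ?thesis
      unfolding lax_coeff.simps jshift_fst jshift_snd
      by (auto simp: algebra_simps intro!: sum.cong)
  qed
  finally show ?thesis
    unfolding lax_coeff_du_def by (simp add: sum.distrib sum_distrib_right)
qed

lemma lax_coeff_dv_Suc:
  "lax_coeff_dv (Suc m) k n J = lax_coeff_dv m k (n - 1) J + lax_coeff_dv m k n J * fst J n
     + lax_coeff_dv m k (n + 1) J * exp (snd J (n + 1))
     + lax_coeff m (n + 1) J * (if n + 1 = k then exp (snd J k) else 0)"
proof -
  let ?t = "\<lambda>p i. lax_coeff p k J * exp (snd J k) * lax_coeff (m - 1 - p) i (jshift (k - 1) J)"
  have "lax_coeff_dv (Suc m) k n J
      = (\<Sum>p<m. lax_coeff p k J * exp (snd J k)
                 * lax_coeff (Suc (m - 1 - p)) (n - k + 1) (jshift (k - 1) J))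
        + lax_coeff m k J * exp (snd J k) * lax_coeff 0 (n - k + 1) (jshift (k - 1) J)"
    unfolding lax_coeff_dv_def by (auto simp: Suc_diff_Suc intro!: sum.cong)
  also have "\<dots> = (\<Sum>p<m. ?t p (n - 1 - k + 1) + ?t p (n - k + 1) * fst J n
                            + ?t p (n + 1 - k + 1) * exp (snd J (n + 1)))
                   + lax_coeff m (n + 1) J * (if n + 1 = k then exp (snd J k) else 0)"
  proof -
    have "n - k + 1 - 1 = n - 1 - k + 1" "n - k + 1 + 1 = n + 1 - k + 1"
      "n - k + 1 + (k - 1) = n" "n + 1 - k + 1 + (k - 1) = n + 1" by simp_all
    then show ?thesis
      unfolding lax_coeff.simps jshift_fst jshift_snd
      by (auto simp: algebra_simps intro!: sum.cong)
  qed
  finally show ?thesis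
    unfolding lax_coeff_dv_def by (simp add: sum.distrib sum_distrib_right)
qed

lemma has_derivative_lax_coeff_u:
  "((\<lambda>s. lax_coeff m n ((fst J)(k := s), snd J)) has_real_derivative lax_coeff_du m k n J)
     (at (fst J k))"
proof (induction m arbitrary: n)
  case 0
  show ?case by (simp add: lax_coeff_du_def)
next
  case (Suc m)
  have d: "((\<lambda>s. ((fst J)(k := s)) n) has_real_derivative (if n = k then 1 else 0)) (at (fst J k))"
    by (cases "n = k") auto
  show ?case
    unfolding lax_coeff.simps fst_conv snd_conv
    by (rule DERIV_cong[OF DERIV_add[OF DERIV_add[OF Suc.IH[of "n - 1"]
          DERIV_mult[OF Suc.IH[of n] d]] DERIV_mult[OF Suc.IH[of "n + 1"] DERIV_const]]])
      (simp add: lax_coeff_du_Suc)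
qed

lemma has_derivative_lax_coeff_v:
  "((\<lambda>s. lax_coeff m n (fst J, (snd J)(k := s))) has_real_derivative lax_coeff_dv m k n J)
     (at (snd J k))"
proof (induction m arbitrary: n)
  case 0
  show ?case by (simp add: lax_coeff_dv_def)
next
  case (Suc m)
  have d: "((\<lambda>s. exp (((snd J)(k := s)) (n + 1))) has_real_derivative
             (if n + 1 = k then exp (snd J k) else 0)) (at (snd J k))"
    by (cases "n + 1 = k") (auto intro!: derivative_eq_intros)
  show ?case
    unfolding lax_coeff.simps fst_conv snd_conv
    by (rule DERIV_cong[OF DERIV_add[OF DERIV_add[OF Suc.IH[of "n - 1"]
          DERIV_mult[OF Suc.IH[of n] DERIV_const]] DERIV_mult[OF Suc.IH[of "n + 1"] d]]])
      (simp add: lax_coeff_dv_Suc algebra_simps)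
qed

lemma lax_coeff_du_out_of_range: "\<bar>k\<bar> > int m \<Longrightarrow> lax_coeff_du m k n J = 0"
  unfolding lax_coeff_du_def by (intro sum.neutral) (auto intro!: lax_coeff_out_of_range)

lemma lax_coeff_dv_out_of_range: "\<bar>k\<bar> > int m \<Longrightarrow> lax_coeff_dv m k n J = 0"
  unfolding lax_coeff_dv_def by (intro sum.neutral) (auto intro!: lax_coeff_out_of_range)

lemma pdU_hdens: "pdU k (hdens n) = (\<lambda>J. lax_coeff_du (Suc n) k 0 J / fact (Suc n))"
  unfolding pdU_def hdens_eq
  by (intro ext DERIV_imp_deriv DERIV_cdivide has_derivative_lax_coeff_u)

lemma pdV_hdens: "pdV k (hdens n) = (\<lambda>J. lax_coeff_dv (Suc n) k 0 J / fact (Suc n))"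
  unfolding pdV_def hdens_eq
  by (intro ext DERIV_imp_deriv DERIV_cdivide has_derivative_lax_coeff_v)

section \<open>Variational derivatives of the Hamiltonians\<close>

lemma sum_over_support:
  assumes "finite S" "\<And>k. k \<notin> S \<Longrightarrow> g k = (\<lambda>_. 0)"
  shows "(\<Sum>k\<in>{k. g k \<noteq> (\<lambda>_. 0)}. g k (h k)) = (\<Sum>k\<in>S. g k (h k))"
  by (rule sum.mono_neutral_left) (use assms in auto)

text \<open>\<open>dH_n/du = Res L^n / n!\<close>: summing the Leibniz terms over all shifts, each of the
  \<open>n + 1\<close> terms reassembles \<open>L^n\<close> by the factorisation lemma.\<close>

lemma varU_hdens: "varU (hdens n) J = lax_coeff n 0 J / fact n"
proof -
  let ?W = "{-int (Suc n)..int (Suc n)}"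
  let ?t = "\<lambda>p k. lax_coeff (n - p) (0 - k) J * lax_coeff p (0 - 0 + k) (jshift (0 - k) J)"
  have "varU (hdens n) J = (\<Sum>k\<in>?W. pdU k (hdens n) (jshift (- k) J))"
    unfolding varU_def
    by (rule sum_over_support) (auto simp: pdU_hdens lax_coeff_du_out_of_range)
  also have "\<dots> = (\<Sum>k\<in>?W. \<Sum>p<Suc n. ?t p k) / fact (Suc n)"
    unfolding pdU_hdens lax_coeff_du_def sum_divide_distrib by (auto intro!: sum.cong)
  also have "\<dots> = (\<Sum>p<Suc n. \<Sum>k\<in>?W. ?t p k) / fact (Suc n)"
    by (subst sum.swap) simp
  also have "\<dots> = (\<Sum>p<Suc n. lax_coeff (p + (n - p)) 0 J) / fact (Suc n)"
    by (intro arg_cong[where f = "\<lambda>x. x / _"] sum.cong refl lax_coeff_add[symmetric]) auto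
  also have "\<dots> = real (Suc n) * lax_coeff n 0 J / fact (Suc n)"
    by simp
  also have "\<dots> = lax_coeff n 0 J / fact n"
    by (simp only: fact_Suc of_nat_mult) simp
  finally show ?thesis .
qed

lemma varV_hdens: "varV (hdens n) J = exp (snd J 0) * lax_coeff n 1 (jshift (-1) J) / fact n"
proof -
  let ?W = "{-int (Suc n)..int (Suc n)}"
  let ?J = "jshift (-1) J"
  let ?t = "\<lambda>p k. lax_coeff (n - p) (1 - k) ?J * lax_coeff p (1 - 1 + k) (jshift (1 - k) ?J)"
  have "varV (hdens n) J = (\<Sum>k\<in>?W. pdV k (hdens n) (jshift (- k) J))"
    unfolding varV_def
    by (rule sum_over_support) (auto simp: pdV_hdens lax_coeff_dv_out_of_range)
  also have "\<dots> = exp (snd J 0) * (\<Sum>k\<in>?W. \<Sum>p<Suc n. ?t p k) / fact (Suc n)"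
    unfolding pdV_hdens lax_coeff_dv_def sum_divide_distrib sum_distrib_left
    by (auto intro!: sum.cong simp: mult_ac)
  also have "\<dots> = exp (snd J 0) * (\<Sum>p<Suc n. \<Sum>k\<in>?W. ?t p k) / fact (Suc n)"
    by (subst sum.swap) simp
  also have "\<dots> = exp (snd J 0) * (\<Sum>p<Suc n. lax_coeff (p + (n - p)) 1 ?J) / fact (Suc n)"
    by (intro arg_cong[where f = "\<lambda>x. _ * x / _"] sum.cong refl lax_coeff_add[symmetric]) auto
  also have "\<dots> = exp (snd J 0) * (real (Suc n) * lax_coeff n 1 ?J) / fact (Suc n)"
    by simp
  also have "\<dots> = exp (snd J 0) * lax_coeff n 1 ?J / fact n"
    by (simp only: fact_Suc of_nat_mult) simp
  finally show ?thesis .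
qed

lemma PB1_u_hdens:
  "PB1_u eps (hdens n) J
     = (exp (snd J 1) * lax_coeff n 1 J - exp (snd J 0) * lax_coeff n 1 (jshift (-1) J))
       / fact n / eps"
  unfolding PB1_u_def varV_hdens Lam_def by (simp add: diff_divide_distrib del: lax_coeff.simps)

lemma PB1_v_hdens:
  "PB1_v eps (hdens n) J = (lax_coeff n 0 J - lax_coeff n 0 (jshift (-1) J)) / fact n / eps"
  unfolding PB1_v_def varU_hdens Lam_def by (simp add: diff_divide_distrib del: lax_coeff.simps)

lemma commutator_coeff_0:
  assumes "eps \<noteq> 0"
  shows "dop_comm (Bplus j) laxL 0 J = eps * PB1_u eps (hdens j) J"
proof -
  have "dop_comm (Bplus j) laxL 0 J
      = (exp (snd J 1) * lax_coeff j 1 J - exp (snd J 0) * lax_coeff j 1 (jshift (-1) J)) / fact j"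
    by (simp add: dop_comm_def Bplus_mul_laxL laxL_mul_Bplus Bplus_eq diff_divide_distrib)
  then show ?thesis
    using assms by (simp add: PB1_u_hdens)
qed

lemma commutator_coeff_minus_1:
  assumes "eps \<noteq> 0"
  shows "dop_comm (Bplus j) laxL (-1) J = exp (snd J 0) * (eps * PB1_v eps (hdens j) J)"
proof -
  have "dop_comm (Bplus j) laxL (-1) J
      = exp (snd J 0) * ((lax_coeff j 0 J - lax_coeff j 0 (jshift (-1) J)) / fact j)"
    by (simp add: dop_comm_def Bplus_mul_laxL laxL_mul_Bplus Bplus_eq right_diff_distrib
        diff_divide_distrib)
  then show ?thesis
    using assms by (simp add: PB1_v_hdens)
qed

section \<open>The bi-Hamiltonian recursion\<close>

lemma Suc_times_div_fact: "real (Suc m) * (X / fact (Suc m) / e) = X / fact m / (e::real)"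
proof -
  have "real (Suc m) * (X / fact (Suc m) / e) = (real (Suc m) / fact (Suc m)) * X / e"
    by simp
  also have "real (Suc m) / fact (Suc m) = 1 / (fact m :: real)"
    by (simp only: fact_Suc of_nat_mult) simp
  finally show ?thesis by simp
qed

text \<open>Both components reduce to the left recursion \<open>L^(m+1) = L L^m\<close> for the
  coefficients \<open>c_(m+1,1)\<close> resp. \<open>c_(m+1,0)\<close>.\<close>

lemma recursion_u:
  assumes "eps \<noteq> 0"
  shows "PB2_u eps (hdens m) J = real (Suc m) * PB1_u eps (hdens (Suc m)) J"
proof -
  have left: "lax_coeff (Suc m) 1 J = lax_coeff m 0 (jshift 1 J) + fst J 0 * lax_coeff m 1 J
                + exp (snd J 0) * lax_coeff m 2 (jshift (-1) J)"
    using lax_coeff_Suc_left[of m 1 J] by simp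
  have right: "lax_coeff (Suc m) 1 (jshift (-1) J) = lax_coeff m 0 (jshift (-1) J)
                 + lax_coeff m 1 (jshift (-1) J) * fst J 0
                 + lax_coeff m 2 (jshift (-1) J) * exp (snd J 1)"
    by simp
  have "PB2_u eps (hdens m) J
      = (exp (snd J 1) * lax_coeff m 0 (jshift 1 J) - exp (snd J 0) * lax_coeff m 0 (jshift (-1) J)
         + fst J 0 * (exp (snd J 1) * lax_coeff m 1 J
                      - exp (snd J 0) * lax_coeff m 1 (jshift (-1) J))) / fact m / eps"
    unfolding PB2_u_def varU_hdens varV_hdens Lam_def
    by (simp add: field_simps assms del: lax_coeff.simps)
  also have "\<dots> = (exp (snd J 1) * lax_coeff (Suc m) 1 J
                   - exp (snd J 0) * lax_coeff (Suc m) 1 (jshift (-1) J)) / fact m / eps"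
    unfolding left right by (simp add: algebra_simps del: lax_coeff.simps)
  finally show ?thesis
    unfolding PB1_u_hdens Suc_times_div_fact .
qed

lemma recursion_v:
  assumes "eps \<noteq> 0"
  shows "PB2_v eps (hdens m) J = real (Suc m) * PB1_v eps (hdens (Suc m)) J"
proof -
  have right: "lax_coeff (Suc m) 0 J = lax_coeff m (-1) J + lax_coeff m 0 J * fst J 0
                 + lax_coeff m 1 J * exp (snd J 1)"
    by simp
  have left: "lax_coeff (Suc m) 0 (jshift (-1) J) = lax_coeff m (-1) J
                + fst J (-1) * lax_coeff m 0 (jshift (-1) J)
                + exp (snd J (-1)) * lax_coeff m 1 (jshift (-2) J)"
    using lax_coeff_Suc_left[of m 0 "jshift (-1) J"] by simp
  have "PB2_v eps (hdens m) J
      = (fst J 0 * lax_coeff m 0 J - fst J (-1) * lax_coeff m 0 (jshift (-1) J)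
         + exp (snd J 1) * lax_coeff m 1 J
         - exp (snd J (-1)) * lax_coeff m 1 (jshift (-2) J)) / fact m / eps"
    unfolding PB2_v_def varU_hdens varV_hdens Lam_def
    by (simp add: field_simps assms del: lax_coeff.simps)
  also have "\<dots> = (lax_coeff (Suc m) 0 J - lax_coeff (Suc m) 0 (jshift (-1) J)) / fact m / eps"
    unfolding left right by (simp add: algebra_simps del: lax_coeff.simps)
  finally show ?thesis
    unfolding PB1_v_hdens Suc_times_div_fact .
qed

theorem mainTheorem9:
  fixes eps :: real
  assumes "eps > 0"
  shows "(\<forall>(j::nat) (u::real \<Rightarrow> real \<Rightarrow> real) (v::real \<Rightarrow> real \<Rightarrow> real)
            (ut::real \<Rightarrow> real \<Rightarrow> real) (vt::real \<Rightarrow> real \<Rightarrow> real).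
           (\<forall>t x. ((\<lambda>s. u s x) has_real_derivative ut t x) (at t)
                \<and> ((\<lambda>s. v s x) has_real_derivative vt t x) (at t)
                \<and> (\<forall>k::int. eps * (if k = 0 then ut t x
                                    else if k = -1 then exp (v t x) * vt t x else 0)
                       = dop_comm (dop_plus_part (Bop j)) laxL k (jet_of eps (u t) (v t) x)))
           \<longrightarrow> (\<forall>t x. ut t x = PB1_u eps (hdens j) (jet_of eps (u t) (v t) x)
                    \<and> vt t x = PB1_v eps (hdens j) (jet_of eps (u t) (v t) x)))
       \<and> (\<forall>(n::nat) (u::real \<Rightarrow> real) (v::real \<Rightarrow> real) (x::real). 1 \<le> n \<longrightarrow>
            PB2_u eps (hdens (n - 1)) (jet_of eps u v x) = real n * PB1_u eps (hdens n) (jet_of eps u v x)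
          \<and> PB2_v eps (hdens (n - 1)) (jet_of eps u v x) = real n * PB1_v eps (hdens n) (jet_of eps u v x))"
proof (intro conjI allI impI)
  have eps: "eps \<noteq> 0" using assms by simp
  fix j u v ut vt t x
  assume flow: "\<forall>t x. ((\<lambda>s. u s x) has_real_derivative ut t x) (at t)
                \<and> ((\<lambda>s. v s x) has_real_derivative vt t x) (at t)
                \<and> (\<forall>k::int. eps * (if k = 0 then ut t x
                                    else if k = -1 then exp (v t x) * vt t x else 0)
                       = dop_comm (dop_plus_part (Bop j)) laxL k (jet_of eps (u t) (v t) x))"
  let ?J = "jet_of eps (u t) (v t) x"
  have v0: "snd ?J 0 = v t x" by (simp add: jet_of_def)
  have lax: "eps * (if k = 0 then ut t x else if k = -1 then exp (v t x) * vt t x else 0)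
               = dop_comm (Bplus j) laxL k ?J" for k :: int
    using flow by blast
  have "eps * ut t x = eps * PB1_u eps (hdens j) ?J"
    using lax[of 0] commutator_coeff_0[OF eps, of j ?J] by simp
  then show "ut t x = PB1_u eps (hdens j) ?J" using eps by simp
  have "eps * (exp (v t x) * vt t x) = exp (v t x) * (eps * PB1_v eps (hdens j) ?J)"
    using lax[of "-1"] commutator_coeff_minus_1[OF eps, of j ?J] v0 by simp
  then show "vt t x = PB1_v eps (hdens j) ?J" using eps by simp
next
  have eps: "eps \<noteq> 0" using assms by simp
  fix n :: nat and u v :: "real \<Rightarrow> real" and x :: real
  assume "1 \<le> n"
  then obtain m where n: "n = Suc m" by (cases n) auto
  show "PB2_u eps (hdens (n - 1)) (jet_of eps u v x) = real n * PB1_u eps (hdens n) (jet_of eps u v x)"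
    unfolding n using recursion_u[OF eps] by simp
  show "PB2_v eps (hdens (n - 1)) (jet_of eps u v x) = real n * PB1_v eps (hdens n) (jet_of eps u v x)"
    unfolding n using recursion_v[OF eps] by simp
qed

end
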